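(* Fix a start pose $\mathbf{p}_0=(x_0,y_0,\theta_0)$ and CSC inputs $\mathbf{u}_i=(v_i,\omega_i)$, $i=1,2,3$ ($v_i>0$, $\omega_1\neq0$, $\omega_2=0$, $\omega_3\neq0$). A pose $\mathbf{p}_f=(x_f,y_f,\theta_f)$ is reachable from $\mathbf{p}_0$ by the CSC path with these inputs if and only if $$(x_f-c)^2+(y_f-d)^2\ \ge\ r_{31}^2,$$ where $c=x_0-r_1\sin\theta_0+r_3\sin\theta_f$ and $d=y_0+r_1\cos\theta_0-r_3\cos\theta_f$.
   Context: A pose is $\mathbf{p}=(x,y,\theta)$, heading understood modulo $2\pi$. An input is $\mathbf{u}=(v,\omega)$. The motion primitive $\mathrm{M}_{\mathbf{u},\tau}$ maps $(x,y,\theta)$ to: if $\omega\neq0$, $\big(x-\frac{v}{\omega}(\sin\theta-\sin(\theta+\omega\tau)),\ y+\frac{v}{\omega}(\cos\theta-\cos(\theta+\omega\tau)),\ \theta+\omega\tau\big)$; if $\omega=0$, $(x+v\tau\cos\theta,\ y+v\tau\sin\theta,\ \theta)$. For a fixed path type with fixed inputs $\mathbf{u}_1,\mathbf{u}_2,\mathbf{u}_3$, a pose $\mathbf{p}_f$ is reachable from $\mathbf{p}_0$ if there exist durations $\tau_1,\tau_2,\tau_3\ge0$, with $|\omega_i\tau_i|<2\pi$ for each turning segment, such that $\mathrm{M}_{\mathbf{u}_3,\tau_3}(\mathrm{M}_{\mathbf{u}_2,\tau_2}(\mathrm{M}_{\mathbf{u}_1,\tau_1}(\mathbf{p}_0)))$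 has position $(x_f,y_f)$ and heading congruent to $\theta_f$ modulo $2\pi$. Notation: $r_i=v_i/\omega_i$ for turning segments, $r_{31}=r_3-r_1$. *)

theory Defs
  imports Complex_Main
begin

type_synonym pose = "real \<times> real \<times> real"   (* (x, y, theta) *)
type_synonym input = "real \<times> real"          (* (v, omega) *)

definition motion :: "input \<Rightarrow> real \<Rightarrow> pose \<Rightarrow> pose" where
  "motion u \<tau> p = (case u of (v, \<omega>) \<Rightarrow> case p of (x, y, \<theta>) \<Rightarrow>
     if \<omega> \<noteq> 0 then
       (x - v / \<omega> * (sin \<theta> - sin (\<theta> + \<omega> * \<tau>)),
        y + v / \<omega> * (cos \<theta> - cos (\<theta> + \<omega> * \<tau>)),
        \<theta> + \<omega> * \<tau>)
     else (x + v * \<tau> * cos \<theta>, y + v * \<tau> * sin \<theta>, \<theta>))"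

definition admissible :: "input \<Rightarrow> real \<Rightarrow> bool" where
  "admissible u \<tau> \<longleftrightarrow> \<tau> \<ge> 0 \<and> (snd u \<noteq> 0 \<longrightarrow> \<bar>snd u * \<tau>\<bar> < 2 * pi)"

definition pose_equiv :: "pose \<Rightarrow> pose \<Rightarrow> bool" where
  "pose_equiv p q \<longleftrightarrow> fst p = fst q \<and> fst (snd p) = fst (snd q) \<and>
     (\<exists>k::int. snd (snd p) = snd (snd q) + 2 * pi * of_int k)"

definition reachable3 :: "input \<Rightarrow> input \<Rightarrow> input \<Rightarrow> pose \<Rightarrow> pose \<Rightarrow> bool" where
  "reachable3 u1 u2 u3 p0 pf \<longleftrightarrow>
     (\<exists>\<tau>1 \<tau>2 \<tau>3. admissible u1 \<tau>1 \<and> admissible u2 \<tau>2 \<and> admissible u3 \<tau>3 \<and>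
        pose_equiv (motion u3 \<tau>3 (motion u2 \<tau>2 (motion u1 \<tau>1 p0))) pf)"

end

theory Submission
  imports Defs
begin

text \<open>A turning segment keeps the car on a circle of radius \<open>r = v/\<omega>\<close> about its turning
  centre, so the first arc leaves the centre \<open>C\<^sub>1\<close> of the start pose fixed and the last arc the
  centre \<open>C\<^sub>3\<close> of the final pose. If the straight segment of length \<open>L\<close> has heading \<open>s\<close>, then
  \<open>C\<^sub>3 - C\<^sub>1 = (r\<^sub>1 - r\<^sub>3)(sin s, -cos s) + L (cos s, sin s)\<close>, a sum of two orthogonal
  vectors, whence \<open>|C\<^sub>3 - C\<^sub>1|\<^sup>2 = r\<^sub>3\<^sub>1\<^sup>2 + L\<^sup>2\<close>. Conversely every vector of length at least
  \<open>|r\<^sub>3\<^sub>1|\<close> has this form for suitable \<open>L \<ge> 0\<close> and \<open>s\<close>, and any heading \<open>s\<close> can be reached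
  by an arc of angle less than \<open>2\<pi>\<close>. The condition of the theorem is \<open>|C\<^sub>3 - C\<^sub>1| \<ge> |r\<^sub>3\<^sub>1|\<close>.\<close>

definition turn_center :: "real \<Rightarrow> pose \<Rightarrow> real \<times> real" where
  "turn_center r p = (case p of (x, y, \<theta>) \<Rightarrow> (x - r * sin \<theta>, y + r * cos \<theta>))"

lemma turn_center_motion:
  assumes "\<omega> \<noteq> 0"
  shows "turn_center (v / \<omega>) (motion (v, \<omega>) \<tau> p) = turn_center (v / \<omega>) p"
  using assms by (cases p) (simp add: motion_def turn_center_def algebra_simps)

lemma heading_motion: "snd (snd (motion (v, \<omega>) \<tau> p)) = snd (snd p) + \<omega> * \<tau>"
  by (cases p) (simp add: motion_def)

lemma pose_equiv_iff_turn_center: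
  "pose_equiv p q \<longleftrightarrow>
     turn_center r p = turn_center r q \<and> (\<exists>k::int. snd (snd p) = snd (snd q) + 2 * pi * of_int k)"
proof -
  obtain x y \<theta> x' y' \<theta>' where pq: "p = (x, y, \<theta>)" "q = (x', y', \<theta>')"
    by (metis prod.exhaust)
  have "x = x' \<and> y = y' \<longleftrightarrow> (x - r * sin \<theta>, y + r * cos \<theta>) = (x' - r * sin \<theta>', y' + r * cos \<theta>')"
    if "\<exists>k::int. \<theta> = \<theta>' + 2 * pi * of_int k"
    using that sin_cos_eq_iff[of \<theta> \<theta>'] by auto
  then show ?thesis
    unfolding pq pose_equiv_def turn_center_def by auto
qed

lemma turn_center_CSC:
  fixes p :: pose and \<tau>1 :: real
  assumes "\<omega>1 \<noteq> 0" "\<omega>3 \<noteq> 0"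
  defines "s \<equiv> snd (snd p) + \<omega>1 * \<tau>1"
  shows "turn_center (v3 / \<omega>3) (motion (v3, \<omega>3) \<tau>3 (motion (v2, 0) \<tau>2 (motion (v1, \<omega>1) \<tau>1 p))) =
    (fst (turn_center (v1 / \<omega>1) p) + (v1 / \<omega>1 - v3 / \<omega>3) * sin s + v2 * \<tau>2 * cos s,
     snd (turn_center (v1 / \<omega>1) p) + v2 * \<tau>2 * sin s - (v1 / \<omega>1 - v3 / \<omega>3) * cos s)"
  using assms unfolding turn_center_motion[OF \<open>\<omega>3 \<noteq> 0\<close>]
  by (cases p) (simp add: motion_def turn_center_def algebra_simps)

lemma exists_remainder_mod_2pi: "\<exists>k::int. 0 \<le> z - 2 * pi * of_int k \<and> z - 2 * pi * of_int k < 2 * pi"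
proof -
  have "z - 2 * pi * of_int \<lfloor>z / (2 * pi)\<rfloor> = 2 * pi * frac (z / (2 * pi))"
    by (simp add: frac_def algebra_simps)
  moreover have "0 \<le> 2 * pi * frac (z / (2 * pi))" "2 * pi * frac (z / (2 * pi)) < 2 * pi"
    using frac_lt_1[of "z / (2 * pi)"] by simp_all
  ultimately show ?thesis by metis
qed

lemma exists_admissible_turn_to_heading:
  assumes "\<omega> \<noteq> 0"
  shows "\<exists>\<tau>. admissible (v, \<omega>) \<tau> \<and> (\<exists>k::int. a + \<omega> * \<tau> = b + 2 * pi * of_int k)"
proof (cases "\<omega> > 0")
  case True
  obtain k :: int where k: "0 \<le> (b - a) - 2 * pi * k" "(b - a) - 2 * pi * k < 2 * pi"
    using exists_remainder_mod_2pi by blast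
  have "admissible (v, \<omega>) (((b - a) - 2 * pi * k) / \<omega>)"
    using True k by (simp add: admissible_def)
  moreover have "a + \<omega> * (((b - a) - 2 * pi * k) / \<omega>) = b + 2 * pi * of_int (- k)"
    using assms by simp
  ultimately show ?thesis by blast
next
  case False
  then have "\<omega> < 0" using assms by simp
  obtain k :: int where k: "0 \<le> (a - b) - 2 * pi * k" "(a - b) - 2 * pi * k < 2 * pi"
    using exists_remainder_mod_2pi by blast
  have "admissible (v, \<omega>) (((a - b) - 2 * pi * k) / - \<omega>)"
    using \<open>\<omega> < 0\<close> k by (simp add: admissible_def divide_nonneg_neg)
  moreover have "a + \<omega> * (((a - b) - 2 * pi * k) / - \<omega>) = b + 2 * pi * of_int k"
    using assms by simp
  ultimately show ?thesis by blast
qed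

lemma exists_rotation:
  fixes X Y a L :: real
  assumes "L\<^sup>2 + a\<^sup>2 = X\<^sup>2 + Y\<^sup>2"
  shows "\<exists>s. X = a * sin s + L * cos s \<and> Y = L * sin s - a * cos s"
proof -
  define w z where "w = Complex X Y" and "z = Complex L (- a)"
  have norm_eq: "cmod w = cmod z"
    using assms by (simp add: w_def z_def cmod_def)
  have "\<exists>s. w = cis s * z"
  proof (cases "z = 0")
    case True
    then show ?thesis using norm_eq by simp
  next
    case False
    then have "w \<noteq> 0"
      using norm_eq by (metis norm_eq_zero)
    then have "cmod (w / z) = 1" "w / z \<noteq> 0"
      using False norm_eq by (simp_all add: norm_divide)
    then have "cis (Arg (w / z)) = w / z"
      by (simp add: cis_Arg sgn_eq)
    then show ?thesis using False by (metis nonzero_eq_divide_eq)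
  qed
  then show ?thesis
    by (auto simp: w_def z_def complex_eq_iff algebra_simps)
qed

lemma exists_heading_and_length_iff:
  fixes X Y a :: real
  shows "(\<exists>s L. L \<ge> 0 \<and> X = a * sin s + L * cos s \<and> Y = L * sin s - a * cos s) \<longleftrightarrow>
    a\<^sup>2 \<le> X\<^sup>2 + Y\<^sup>2"
proof
  assume "\<exists>s L. L \<ge> 0 \<and> X = a * sin s + L * cos s \<and> Y = L * sin s - a * cos s"
  then obtain s L where "X = a * sin s + L * cos s" "Y = L * sin s - a * cos s"
    by blast
  then have "X\<^sup>2 + Y\<^sup>2 = (a\<^sup>2 + L\<^sup>2) * ((sin s)\<^sup>2 + (cos s)\<^sup>2)"
    by algebra
  then show "a\<^sup>2 \<le> X\<^sup>2 + Y\<^sup>2" by simp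
next
  assume "a\<^sup>2 \<le> X\<^sup>2 + Y\<^sup>2"
  define L where "L = sqrt (X\<^sup>2 + Y\<^sup>2 - a\<^sup>2)"
  have "L \<ge> 0" "L\<^sup>2 + a\<^sup>2 = X\<^sup>2 + Y\<^sup>2"
    using \<open>a\<^sup>2 \<le> X\<^sup>2 + Y\<^sup>2\<close> by (simp_all add: L_def)
  then show "\<exists>s L. L \<ge> 0 \<and> X = a * sin s + L * cos s \<and> Y = L * sin s - a * cos s"
    using exists_rotation by blast
qed

lemma reachable3_CSC_iff:
  fixes p0 pf :: pose and v1 \<omega>1 v2 v3 \<omega>3 :: real
  assumes "\<omega>1 \<noteq> 0" "v2 > 0" "\<omega>3 \<noteq> 0"
  defines "r1 \<equiv> v1 / \<omega>1" and "r3 \<equiv> v3 / \<omega>3"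
  shows "reachable3 (v1, \<omega>1) (v2, 0) (v3, \<omega>3) p0 pf \<longleftrightarrow>
    (\<exists>s L. L \<ge> 0 \<and>
       fst (turn_center r3 pf) - fst (turn_center r1 p0) = (r1 - r3) * sin s + L * cos s \<and>
       snd (turn_center r3 pf) - snd (turn_center r1 p0) = L * sin s - (r1 - r3) * cos s)"
    (is "_ \<longleftrightarrow> (\<exists>s L. L \<ge> 0 \<and> ?offset s L)")
proof
  assume "reachable3 (v1, \<omega>1) (v2, 0) (v3, \<omega>3) p0 pf"
  then obtain \<tau>1 \<tau>2 \<tau>3 where "\<tau>2 \<ge> 0"
    and reach: "pose_equiv (motion (v3, \<omega>3) \<tau>3 (motion (v2, 0) \<tau>2 (motion (v1, \<omega>1) \<tau>1 p0))) pf"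
    unfolding reachable3_def admissible_def by auto
  have "?offset (snd (snd p0) + \<omega>1 * \<tau>1) (v2 * \<tau>2)"
    using reach unfolding pose_equiv_iff_turn_center[where r = r3] r1_def r3_def
    by (auto simp: turn_center_CSC[OF assms(1,3)] prod_eq_iff algebra_simps)
  moreover have "v2 * \<tau>2 \<ge> 0"
    using \<open>v2 > 0\<close> \<open>\<tau>2 \<ge> 0\<close> by simp
  ultimately show "\<exists>s L. L \<ge> 0 \<and> ?offset s L" by blast
next
  assume "\<exists>s L. L \<ge> 0 \<and> ?offset s L"
  then obtain s L where "L \<ge> 0" and offset: "?offset s L" by blast
  obtain \<tau>1 k1 where \<tau>1: "admissible (v1, \<omega>1) \<tau>1"
    and k1: "snd (snd p0) + \<omega>1 * \<tau>1 = s + 2 * pi * of_int k1"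
    using exists_admissible_turn_to_heading[OF assms(1)] by blast
  obtain \<tau>3 k3 where \<tau>3: "admissible (v3, \<omega>3) \<tau>3"
    and k3: "s + \<omega>3 * \<tau>3 = snd (snd pf) + 2 * pi * of_int k3"
    using exists_admissible_turn_to_heading[OF assms(3)] by blast
  define \<tau>2 where "\<tau>2 = L / v2"
  have \<tau>2: "admissible (v2, 0) \<tau>2" and "v2 * \<tau>2 = L"
    using \<open>L \<ge> 0\<close> \<open>v2 > 0\<close> by (simp_all add: \<tau>2_def admissible_def)
  have "sin (snd (snd p0) + \<omega>1 * \<tau>1) = sin s" "cos (snd (snd p0) + \<omega>1 * \<tau>1) = cos s"
    using k1 sin_cos_eq_iff by blast+
  then have "turn_center r3 (motion (v3, \<omega>3) \<tau>3 (motion (v2, 0) \<tau>2 (motion (v1, \<omega>1) \<tau>1 p0))) =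
      turn_center r3 pf"
    using offset \<open>v2 * \<tau>2 = L\<close> unfolding r1_def r3_def
    by (simp add: turn_center_CSC[OF assms(1,3)] prod_eq_iff algebra_simps)
  moreover have "snd (snd (motion (v3, \<omega>3) \<tau>3 (motion (v2, 0) \<tau>2 (motion (v1, \<omega>1) \<tau>1 p0)))) =
      snd (snd pf) + 2 * pi * of_int (k1 + k3)"
    using k1 k3 by (simp add: heading_motion algebra_simps)
  ultimately show "reachable3 (v1, \<omega>1) (v2, 0) (v3, \<omega>3) p0 pf"
    unfolding reachable3_def pose_equiv_iff_turn_center[where r = r3] using \<tau>1 \<tau>2 \<tau>3 by blast
qed

theorem theorem1:
  fixes x0 y0 \<theta>0 xf yf \<theta>f v1 \<omega>1 v2 \<omega>2 v3 \<omega>3 :: real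
  assumes "v1 > 0" "v2 > 0" "v3 > 0"
    and "\<omega>1 \<noteq> 0" "\<omega>2 = 0" "\<omega>3 \<noteq> 0"
  shows "reachable3 (v1, \<omega>1) (v2, \<omega>2) (v3, \<omega>3) (x0, y0, \<theta>0) (xf, yf, \<theta>f) \<longleftrightarrow>
    (let r1 = v1 / \<omega>1; r3 = v3 / \<omega>3; r31 = r3 - r1;
         c = x0 - r1 * sin \<theta>0 + r3 * sin \<theta>f;
         d = y0 + r1 * cos \<theta>0 - r3 * cos \<theta>f
     in (xf - c)\<^sup>2 + (yf - d)\<^sup>2 \<ge> r31\<^sup>2)"
proof -
  define r1 r3 where "r1 = v1 / \<omega>1" and "r3 = v3 / \<omega>3"
  have centers: "fst (turn_center r3 (xf, yf, \<theta>f)) - fst (turn_center r1 (x0, y0, \<theta>0)) =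
      xf - (x0 - r1 * sin \<theta>0 + r3 * sin \<theta>f)"
    "snd (turn_center r3 (xf, yf, \<theta>f)) - snd (turn_center r1 (x0, y0, \<theta>0)) =
      yf - (y0 + r1 * cos \<theta>0 - r3 * cos \<theta>f)"
    by (simp_all add: turn_center_def)
  have "(r1 - r3)\<^sup>2 = (r3 - r1)\<^sup>2"
    by (rule power2_commute)
  then show ?thesis
    using reachable3_CSC_iff[OF assms(4,2,6), of v1 v3 "(x0, y0, \<theta>0)" "(xf, yf, \<theta>f)"]
      exists_heading_and_length_iff[of _ "r1 - r3"]
    unfolding centers r1_def[symmetric] r3_def[symmetric] \<open>\<omega>2 = 0\<close> Let_def
    by simp
qed

end
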